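(* Let $P_X$ be any probability distribution on $\mathcal{X}$ and let $(\mu_n)$ be a divergent sequence in $\mathcal{X}$, i.e. $d(\mu_n, \mu) \to \infty$ as $n \to \infty$ for every fixed $\mu \in \mathcal{X}$. Then $D(\mu_n; P_X) \to 0$ as $n \to \infty$.
   Context: $(\mathcal{X}, d)$ is a complete separable metric space with its Borel $\sigma$-algebra. Define $h: \mathcal{X}^3 \to \mathbb{R}$ by $h(x_1, x_2, x_3) := \mathbb{I}( x_3 \notin \{x_1, x_2\} ) \dfrac{ d^2(x_1, x_3) + d^2(x_2, x_3) - d^2(x_1, x_2) }{d(x_1, x_3)\, d(x_2, x_3) }$, where $h := 0$ when $x_3 \in \{x_1,x_2\}$. The metric spatial depth of $\mu \in \mathcal{X}$ with respect to a probability distribution $P_X$ on $\mathcal{X}$ is $D(\mu; P_X) := 1 - \frac{1}{2} \mathrm{E} \{ h(X_1, X_2, \mu) \}$, where $X_1, X_2 \sim P_X$ are independent. *)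

theory Defs
  imports "HOL-Probability.Probability"
begin

definition msd_h :: "'a::metric_space \<Rightarrow> 'a \<Rightarrow> 'a \<Rightarrow> real" where
  "msd_h x1 x2 x3 =
     (if x3 \<notin> {x1, x2}
      then (dist x1 x3 ^ 2 + dist x2 x3 ^ 2 - dist x1 x2 ^ 2) / (dist x1 x3 * dist x2 x3)
      else 0)"

definition msdepth :: "'a::metric_space \<Rightarrow> 'a measure \<Rightarrow> real" where
  "msdepth \<mu> P = 1 - 1/2 * (\<integral>z. msd_h (fst z) (snd z) \<mu> \<partial>(P \<Otimes>\<^sub>M P))"

end

theory Submission
  imports Defs
begin

text \<open>Writing a, b for the distances from \<mu> to X1, X2 and c for dist X1 X2, the kernel is
  h = 2 - (c^2 - (a - b)^2) / (a b). The triangle inequality gives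
  \<bar>a - b\<bar> \<le> c \<le> a + b, so \<bar>h\<bar> \<le> 2, and for fixed X1, X2 the defect is at most c^2 / (a b),
  which vanishes as \<mu> diverges. Dominated convergence then turns the pointwise limit h \<rightarrow> 2
  into E h \<rightarrow> 2, i.e. depth \<rightarrow> 0.\<close>

lemma two_minus_msd_h:
  assumes "x3 \<notin> {x1, x2}"
  shows "2 - msd_h x1 x2 x3
           = (dist x1 x2 ^ 2 - (dist x1 x3 - dist x2 x3) ^ 2) / (dist x1 x3 * dist x2 x3)"
proof -
  have "dist x1 x3 > 0" "dist x2 x3 > 0" using assms by auto
  then show ?thesis using assms by (simp add: msd_h_def field_simps power2_eq_square)
qed

lemma sq_dist_diff_le: "(dist x1 x3 - dist x2 x3) ^ 2 \<le> dist x1 x2 ^ 2"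
proof -
  have "\<bar>dist x1 x3 - dist x3 x2\<bar> \<le> dist x1 x2"
    by (rule abs_dist_diff_le)
  then show ?thesis
    by (metis abs_le_square_iff abs_of_nonneg dist_commute zero_le_dist)
qed

lemma msd_h_le_2: "msd_h x1 x2 x3 \<le> 2"
proof (cases "x3 \<in> {x1, x2}")
  case True
  then show ?thesis by (simp add: msd_h_def)
next
  case False
  have "0 \<le> (dist x1 x2 ^ 2 - (dist x1 x3 - dist x2 x3) ^ 2) / (dist x1 x3 * dist x2 x3)"
    using sq_dist_diff_le[of x1 x3 x2] by simp
  then show ?thesis using two_minus_msd_h[OF False] by linarith
qed

lemma msd_h_ge_minus_2: "-2 \<le> msd_h x1 x2 x3"
proof (cases "x3 \<in> {x1, x2}")
  case True
  then show ?thesis by (simp add: msd_h_def)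
next
  case False
  define a where "a = dist x1 x3"
  define b where "b = dist x2 x3"
  define c where "c = dist x1 x2"
  have "a > 0" "b > 0" using False by (auto simp: a_def b_def)
  have "c \<le> a + b" unfolding a_def b_def c_def by (metis dist_commute dist_triangle)
  then have "c ^ 2 \<le> (a + b) ^ 2" by (simp add: c_def power_mono)
  then have "(c ^ 2 - (a - b) ^ 2) / (a * b) \<le> 4"
    using \<open>a > 0\<close> \<open>b > 0\<close> by (simp add: divide_le_eq power2_eq_square algebra_simps)
  then show ?thesis using two_minus_msd_h[OF False] by (simp add: a_def b_def c_def)
qed

lemma abs_msd_h_le_2: "\<bar>msd_h x1 x2 x3\<bar> \<le> 2"
  using msd_h_le_2[of x1 x2 x3] msd_h_ge_minus_2[of x1 x2 x3] by (simp add: abs_le_iff)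

lemma msd_h_tendsto_2:
  fixes m :: "nat \<Rightarrow> 'a::metric_space"
  assumes diverge: "\<And>\<mu>. filterlim (\<lambda>n. dist (m n) \<mu>) at_top sequentially"
  shows "(\<lambda>n. msd_h x1 x2 (m n)) \<longlonglongrightarrow> 2"
proof -
  define a where "a = (\<lambda>n. dist x1 (m n))"
  define b where "b = (\<lambda>n. dist x2 (m n))"
  have a: "filterlim a at_top sequentially" and b: "filterlim b at_top sequentially"
    using diverge[of x1] diverge[of x2] by (simp_all add: a_def b_def dist_commute)
  have bound: "(\<lambda>n. dist x1 x2 ^ 2 / (a n * b n)) \<longlonglongrightarrow> 0"
    by (intro tendsto_divide_0[OF tendsto_const] filterlim_at_top_imp_at_infinity
        filterlim_at_top_mult_at_top a b)
  have "eventually (\<lambda>n. a n > 0 \<and> b n > 0) sequentially"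
    using a b by (simp add: filterlim_at_top_dense eventually_conj)
  then have "eventually (\<lambda>n. norm (msd_h x1 x2 (m n) - 2) \<le> dist x1 x2 ^ 2 / (a n * b n))
               sequentially"
  proof eventually_elim
    case (elim n)
    then have "m n \<notin> {x1, x2}" by (auto simp: a_def b_def)
    then show ?case
      using two_minus_msd_h[of "m n" x1 x2] msd_h_le_2[of x1 x2 "m n"] elim
        sq_dist_diff_le[of x1 "m n" x2]
      by (simp add: a_def b_def divide_right_mono)
  qed
  then have "(\<lambda>n. msd_h x1 x2 (m n) - 2) \<longlonglongrightarrow> 0"
    using bound by (rule Lim_null_comparison)
  then show ?thesis
    by (rule LIM_zero_cancel)
qed

lemma borel_measurable_msd_h:
  fixes \<mu> :: "'a::{second_countable_topology, metric_space}"
  shows "(\<lambda>z. msd_h (fst z) (snd z) \<mu>) \<in> borel_measurable (borel \<Otimes>\<^sub>M borel)"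
  unfolding msd_h_def insert_iff empty_iff by measurable

theorem theorem4:
  fixes P :: "'a::polish_space measure" and m :: "nat \<Rightarrow> 'a"
  assumes "prob_space P"
    and "sets P = sets borel"
    and "\<And>\<mu>. filterlim (\<lambda>n. dist (m n) \<mu>) at_top sequentially"
  shows "(\<lambda>n. msdepth (m n) P) \<longlonglongrightarrow> 0"
proof -
  interpret PP: prob_space "P \<Otimes>\<^sub>M P"
    using assms(1) by (simp add: prob_space_pair)
  have sets_PP: "sets (P \<Otimes>\<^sub>M P) = sets (borel \<Otimes>\<^sub>M borel)"
    using assms(2) by (intro sets_pair_measure_cong) auto
  have "(\<lambda>n. \<integral>z. msd_h (fst z) (snd z) (m n) \<partial>(P \<Otimes>\<^sub>M P)) \<longlonglongrightarrow> (\<integral>z. 2 \<partial>(P \<Otimes>\<^sub>M P))"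
  proof (rule integral_dominated_convergence[where w = "\<lambda>_. 2"])
    show "(\<lambda>z. msd_h (fst z) (snd z) (m n)) \<in> borel_measurable (P \<Otimes>\<^sub>M P)" for n
      using borel_measurable_msd_h by (subst measurable_cong_sets[OF sets_PP refl])
    show "AE z in P \<Otimes>\<^sub>M P. (\<lambda>n. msd_h (fst z) (snd z) (m n)) \<longlonglongrightarrow> 2"
      using msd_h_tendsto_2[OF assms(3)] by simp
    show "AE z in P \<Otimes>\<^sub>M P. norm (msd_h (fst z) (snd z) (m n)) \<le> 2" for n
      by (intro AE_I2) (simp add: abs_msd_h_le_2)
  qed simp_all
  then have "(\<lambda>n. 1 - 1/2 * (\<integral>z. msd_h (fst z) (snd z) (m n) \<partial>(P \<Otimes>\<^sub>M P))) \<longlonglongrightarrow> 1 - 1/2 * 2"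
    by (intro tendsto_intros) (simp add: PP.prob_space)
  then show ?thesis
    by (simp add: msdepth_def)
qed

end
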